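(* Let $G$ be a graph, $\theta$ a real number, and $X\subseteq V(G)$ with $|X|>1$. Then $X$ is a $\theta$-extreme set in $G$ if and only if $X$ is $\theta$-nice in $G$, i.e. if and only if $\mathrm{mult}(\theta,G\setminus \{u,v\})=\mathrm{mult}(\theta,G)+2$ for all distinct $u,v\in X$.
   Context: All graphs are finite and simple. For a graph $G$ on $n$ vertices, let $p(G,r)$ be the number of $r$-matchings of $G$ ($p(G,0)=1$); the matching polynomial is $\mu(G,x)=\sum_{r=0}^{\lfloor n/2\rfloor}(-1)^r p(G,r)x^{n-2r}$. For real $\theta$, $\mathrm{mult}(\theta,G)$ is the multiplicity of $\theta$ as a root of $\mu(G,x)$ (it is $0$ if $\theta$ is not a root). For $X\subseteq V(G)$, $G\setminus X$ is the graph obtained by deleting the vertices of $X$ and their incident edges. A set $X\subseteq V(G)$ is a $\theta$-extreme set if $\mathrm{mult}(\theta,G\setminus X)=\mathrm{mult}(\theta,G)+|X|$. A set $X$ with $|X|>1$ is $\theta$-nice if $\mathrm{mult}(\theta,G\setminus\{u,v\})=\mathrm{mult}(\theta,G)+2$ for all distinct $u,v\in X$. *)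

theory Defs
  imports "HOL-Analysis.Analysis" "HOL-Computational_Algebra.Polynomial"
begin

definition simple_graph :: "'a set \<Rightarrow> 'a set set \<Rightarrow> bool" where
  "simple_graph V E \<longleftrightarrow> finite V \<and> (\<forall>e\<in>E. e \<subseteq> V \<and> card e = 2)"

text \<open>Edges of G minus X: edges avoiding X (vertex set becomes V - X).\<close>
definition del_edges :: "'a set set \<Rightarrow> 'a set \<Rightarrow> 'a set set" where
  "del_edges E X = {e \<in> E. e \<inter> X = {}}"

definition matchings :: "'a set set \<Rightarrow> nat \<Rightarrow> 'a set set set" where
  "matchings E r = {M. M \<subseteq> E \<and> card M = r \<and> pairwise disjnt M}"

definition num_matchings :: "'a set set \<Rightarrow> nat \<Rightarrow> nat" where
  "num_matchings E r = card (matchings E r)"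

definition match_poly :: "'a set \<Rightarrow> 'a set set \<Rightarrow> real poly" where
  "match_poly V E = (\<Sum>r\<le>card V div 2.
      monom ((-1) ^ r * real (num_matchings E r)) (card V - 2 * r))"

definition mult :: "real \<Rightarrow> 'a set \<Rightarrow> 'a set set \<Rightarrow> nat" where
  "mult \<theta> V E = order \<theta> (match_poly V E)"

definition theta_extreme :: "real \<Rightarrow> 'a set \<Rightarrow> 'a set set \<Rightarrow> 'a set \<Rightarrow> bool" where
  "theta_extreme \<theta> V E X \<longleftrightarrow>
     mult \<theta> (V - X) (del_edges E X) = mult \<theta> V E + card X"

definition theta_nice :: "real \<Rightarrow> 'a set \<Rightarrow> 'a set set \<Rightarrow> 'a set \<Rightarrow> bool" where
  "theta_nice \<theta> V E X \<longleftrightarrow> card X > 1 \<and>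
     (\<forall>u\<in>X. \<forall>v\<in>X. u \<noteq> v \<longrightarrow>
        mult \<theta> (V - {u, v}) (del_edges E {u, v}) = mult \<theta> V E + 2)"

end

theory Submission
  imports Defs
begin

(* The argument is analytic and goes through the multivariate matching polynomial
     mu(G; x) = sum over matchings M of (-1)^|M| * prod of x_v over the vertices v not covered by M,
   which specialises to the matching polynomial when all x_v equal z.
   1. mu satisfies the vertex recurrence mu(G) = x_u mu(G - u) - sum over neighbours v of mu(G - u - v);
      by induction this gives the Heilmann-Lieb stability theorem: if every x_v lies in the open upper
      half-plane then mu(G) <> 0 and Im (mu(G - u) / mu(G)) < 0.
   2. For a single variable this says that mu(G - u) / mu(G) maps the upper half-plane into the lower one;
      a local analysis at a real root shows that deleting a vertex changes mult(theta, .) by at most one.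
      Hence mult(theta, G - S) <= mult(theta, G) + |S|, and subsets of theta-extreme sets are extreme.
   3. Shifting the variables of the vertices of X by s turns mu into a polynomial in s whose coefficients
      are the "layers" sum over |S| = j of mu(G - S).  Stability of that pencil, evaluated along a
      suitable curve approaching a real point, forces the top layer to vanish to order m + |X| as soon as
      all intermediate layers vanish to the orders m + j: a theta-nice set all of whose proper subsets are
      extreme is itself extreme.
   The theorem follows: extreme sets are nice by step 2, and nice sets are extreme by induction on the
   size of their subsets, using step 3 for subsets of size at least three. *)

definition all_matchings :: "'a set set \<Rightarrow> 'a set set set" where
  "all_matchings E = {M. M \<subseteq> E \<and> pairwise disjnt M}"

definition mmatch_poly :: "'a set \<Rightarrow> 'a set set \<Rightarrow> ('a \<Rightarrow> complex) \<Rightarrow> complex" where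
  "mmatch_poly V E x = (\<Sum>M\<in>all_matchings E. (-1) ^ card M * (\<Prod>v\<in>V - \<Union>M. x v))"

(* The matching polynomial with complex coefficients, so that it can be evaluated off the real line. *)
definition cmatch_poly :: "'a set \<Rightarrow> 'a set set \<Rightarrow> complex poly" where
  "cmatch_poly V E = map_poly complex_of_real (match_poly V E)"

definition neighbours :: "'a set set \<Rightarrow> 'a \<Rightarrow> 'a set" where
  "neighbours E u = {v. {u, v} \<in> E}"

lemma simple_graph_finite_edges: "simple_graph V E \<Longrightarrow> finite E"
  unfolding simple_graph_def by (meson PowI finite_Pow_iff finite_subset subsetI)

lemma simple_graph_finite_subset: "simple_graph V E \<Longrightarrow> X \<subseteq> V \<Longrightarrow> finite X"
  unfolding simple_graph_def by (meson finite_subset)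

lemma finite_all_matchings: "finite E \<Longrightarrow> finite (all_matchings E)"
  unfolding all_matchings_def by (rule finite_subset[of _ "Pow E"]) auto

lemma simple_graph_del_edges: "simple_graph V E \<Longrightarrow> simple_graph (V - S) (del_edges E S)"
  unfolding simple_graph_def del_edges_def by auto

lemma del_edges_del_edges [simp]: "del_edges (del_edges E S) T = del_edges E (S \<union> T)"
  unfolding del_edges_def by auto

lemma del_edges_empty [simp]: "del_edges E {} = E"
  unfolding del_edges_def by auto

lemma Diff_Diff_Un: "V - S - T = V - (S \<union> T)"
  by auto

lemma neighbours_subset: "simple_graph V E \<Longrightarrow> neighbours E u \<subseteq> V - {u}"
  unfolding neighbours_def simple_graph_def by (auto simp: card_2_iff doubleton_eq_iff)

lemma mmatch_poly_cong:
  "(\<And>v. v \<in> V \<Longrightarrow> x v = y v) \<Longrightarrow> mmatch_poly V E x = mmatch_poly V E y"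
  unfolding mmatch_poly_def by (intro sum.cong refl arg_cong2[where f="(*)"] prod.cong) auto

lemma mmatch_poly_no_vertices: "simple_graph {} E \<Longrightarrow> mmatch_poly {} E x = 1"
proof -
  assume "simple_graph {} E"
  then have "E = {}" unfolding simple_graph_def by force
  then have "all_matchings E = {{}}" unfolding all_matchings_def by auto
  then show ?thesis unfolding mmatch_poly_def by simp
qed

lemma matching_covers:
  assumes "simple_graph V E" "M \<in> all_matchings E"
  shows "card (\<Union>M) = 2 * card M" "\<Union>M \<subseteq> V"
proof -
  have "card (\<Union>M) = sum card M"
    using assms by (intro card_Union_disjoint)
      (auto simp: all_matchings_def simple_graph_def intro: finite_subset)
  also have "\<dots> = sum (\<lambda>_. 2) M"
    using assms by (intro sum.cong) (auto simp: all_matchings_def simple_graph_def)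
  finally show "card (\<Union>M) = 2 * card M" by simp
  show "\<Union>M \<subseteq> V" using assms by (auto simp: all_matchings_def simple_graph_def)
qed

lemma map_poly_of_real_sum:
  "map_poly complex_of_real (sum f A) = (\<Sum>a\<in>A. map_poly complex_of_real (f a))"
  by (rule poly_eqI) (simp add: coeff_map_poly coeff_sum)

(* Setting all variables equal to z recovers the matching polynomial: group the matchings by size. *)
lemma mmatch_poly_const:
  assumes sg: "simple_graph V E"
  shows "mmatch_poly V E (\<lambda>_. z) = poly (cmatch_poly V E) z"
proof -
  let ?n = "card V"
  have fV: "finite V" using sg simple_graph_def by blast
  have fM: "finite (all_matchings E)"
    using finite_all_matchings simple_graph_finite_edges sg by blast
  have size: "card M \<le> ?n div 2" if M: "M \<in> all_matchings E" for M
  proof -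
    have "card (\<Union>M) \<le> ?n" by (rule card_mono[OF fV matching_covers(2)[OF sg M]])
    then show ?thesis using matching_covers(1)[OF sg M] by (simp add: less_eq_div_iff_mult_less_eq)
  qed
  have rest: "card (V - \<Union>M) = ?n - 2 * card M" if M: "M \<in> all_matchings E" for M
    using matching_covers[OF sg M] fV by (simp add: card_Diff_subset finite_subset)
  have "mmatch_poly V E (\<lambda>_. z) = (\<Sum>M\<in>all_matchings E. (-1) ^ card M * z ^ (?n - 2 * card M))"
    unfolding mmatch_poly_def by (intro sum.cong refl) (simp add: rest)
  also have "\<dots> = (\<Sum>r\<le>?n div 2. \<Sum>M | M \<in> all_matchings E \<and> card M = r.
                     (-1) ^ card M * z ^ (?n - 2 * card M))"
    by (rule sum.group[symmetric, OF fM]) (use size in auto)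
  also have "\<dots> = (\<Sum>r\<le>?n div 2. of_nat (num_matchings E r) * ((-1) ^ r * z ^ (?n - 2 * r)))"
  proof (intro sum.cong refl)
    fix r
    have "{M. M \<in> all_matchings E \<and> card M = r} = matchings E r"
      unfolding all_matchings_def matchings_def by auto
    then have "(\<Sum>M | M \<in> all_matchings E \<and> card M = r. (-1) ^ card M * z ^ (?n - 2 * card M))
        = (\<Sum>M\<in>matchings E r. (-1) ^ r * z ^ (?n - 2 * r))"
      by (intro sum.cong) (auto simp: matchings_def)
    then show "(\<Sum>M | M \<in> all_matchings E \<and> card M = r. (-1) ^ card M * z ^ (?n - 2 * card M)) =
       of_nat (num_matchings E r) * ((-1) ^ r * z ^ (?n - 2 * r))"
      unfolding num_matchings_def by simp
  qed
  also have "\<dots> = poly (cmatch_poly V E) z"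
    unfolding cmatch_poly_def match_poly_def map_poly_of_real_sum poly_sum
    by (intro sum.cong refl) (simp add: map_poly_monom poly_monom)
  finally show ?thesis .
qed

lemma all_matchings_avoiding:
  "all_matchings (del_edges E {u}) = {M \<in> all_matchings E. u \<notin> \<Union>M}"
  unfolding all_matchings_def del_edges_def by auto

lemma matchings_through_edge:
  assumes e: "e \<in> E" "e \<noteq> {}"
  shows "bij_betw (insert e) (all_matchings (del_edges E e)) {M \<in> all_matchings E. e \<in> M}"
proof (rule bij_betw_imageI)
  have avoid: "e \<notin> M" if "M \<in> all_matchings (del_edges E e)" for M
    using that e(2) unfolding all_matchings_def del_edges_def by auto
  show "inj_on (insert e) (all_matchings (del_edges E e))"
    by (rule inj_onI) (metis avoid insert_ident)
  show "insert e ` all_matchings (del_edges E e) = {M \<in> all_matchings E. e \<in> M}"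
  proof (intro equalityI subsetI)
    fix M assume "M \<in> insert e ` all_matchings (del_edges E e)"
    then obtain M' where M': "M' \<in> all_matchings (del_edges E e)" and M: "M = insert e M'"
      by blast
    have "\<forall>f\<in>M'. f \<noteq> e \<longrightarrow> disjnt e f \<and> disjnt f e"
      using M' unfolding all_matchings_def del_edges_def disjnt_def by auto
    then have "pairwise disjnt M"
      using M' unfolding M all_matchings_def by (simp add: pairwise_insert)
    then show "M \<in> {M \<in> all_matchings E. e \<in> M}"
      using M' e(1) unfolding M by (auto simp: all_matchings_def del_edges_def)
  next
    fix M assume M: "M \<in> {M \<in> all_matchings E. e \<in> M}"
    then have pw: "pairwise disjnt M" and "M \<subseteq> E" "e \<in> M"
      by (auto simp: all_matchings_def)
    have "f \<inter> e = {}" if "f \<in> M" "f \<noteq> e" for f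
      using pairwiseD[OF pw that(1) \<open>e \<in> M\<close> that(2)] by (simp add: disjnt_def)
    then have "M - {e} \<in> all_matchings (del_edges E e)"
      using \<open>M \<subseteq> E\<close> pairwise_subset[OF pw, of "M - {e}"]
      unfolding all_matchings_def del_edges_def by blast
    then show "M \<in> insert e ` all_matchings (del_edges E e)"
      using \<open>e \<in> M\<close> by (metis image_eqI insert_Diff)
  qed
qed

lemma matchings_at_vertex:
  assumes sg: "simple_graph V E"
  shows "all_matchings E = {M \<in> all_matchings E. u \<notin> \<Union>M}
           \<union> (\<Union>v\<in>neighbours E u. {M \<in> all_matchings E. {u, v} \<in> M})"
    and "v \<noteq> w \<Longrightarrow> {M \<in> all_matchings E. {u, v} \<in> M} \<inter> {M \<in> all_matchings E. {u, w} \<in> M} = {}"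
proof -
  show "all_matchings E = {M \<in> all_matchings E. u \<notin> \<Union>M}
      \<union> (\<Union>v\<in>neighbours E u. {M \<in> all_matchings E. {u, v} \<in> M})"
  proof (intro equalityI subsetI)
    fix M assume M: "M \<in> all_matchings E"
    show "M \<in> {M \<in> all_matchings E. u \<notin> \<Union>M}
        \<union> (\<Union>v\<in>neighbours E u. {M \<in> all_matchings E. {u, v} \<in> M})"
    proof (cases "u \<in> \<Union>M")
      case True
      then obtain e where e: "e \<in> M" "u \<in> e" by blast
      have "e \<in> E" "card e = 2" using e M sg by (auto simp: all_matchings_def simple_graph_def)
      then obtain v where "e = {u, v}" using e(2) by (auto simp: card_2_iff doubleton_eq_iff)
      then show ?thesis using e M \<open>e \<in> E\<close> by (auto simp: neighbours_def)
    qed (use M in auto)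
  qed auto
  assume "v \<noteq> w"
  show "{M \<in> all_matchings E. {u, v} \<in> M} \<inter> {M \<in> all_matchings E. {u, w} \<in> M} = {}"
  proof (rule ccontr)
    assume "{M \<in> all_matchings E. {u, v} \<in> M} \<inter> {M \<in> all_matchings E. {u, w} \<in> M} \<noteq> {}"
    then obtain M where M: "pairwise disjnt M" "{u, v} \<in> M" "{u, w} \<in> M"
      by (auto simp: all_matchings_def)
    have "{u, v} \<noteq> {u, w}" using \<open>v \<noteq> w\<close> by (auto simp: doubleton_eq_iff)
    then have "disjnt {u, v} {u, w}" using M by (meson pairwiseD)
    then show False by (simp add: disjnt_def)
  qed
qed

(* Vertex recurrence: split the matchings according to the edge covering u, if any. *)
lemma mmatch_poly_vertex_rec:
  assumes sg: "simple_graph V E" and u: "u \<in> V"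
  shows "mmatch_poly V E x = x u * mmatch_poly (V - {u}) (del_edges E {u}) x
           - (\<Sum>v\<in>neighbours E u. mmatch_poly (V - {u, v}) (del_edges E {u, v}) x)"
proof -
  define f where "f M = (-1) ^ card M * (\<Prod>v\<in>V - \<Union>M. x v)" for M :: "'a set set"
  have fV: "finite V" using sg simple_graph_def by blast
  have fE: "finite E" using sg simple_graph_finite_edges by blast
  have fM: "finite (all_matchings E)" using finite_all_matchings fE by blast
  have fN: "finite (neighbours E u)"
    using neighbours_subset[OF sg] fV finite_subset by blast
  define A where "A = {M \<in> all_matchings E. u \<notin> \<Union>M}"
  define B where "B v = {M \<in> all_matchings E. {u, v} \<in> M}" for v
  have split: "all_matchings E = A \<union> (\<Union>v\<in>neighbours E u. B v)"
    unfolding A_def B_def by (rule matchings_at_vertex(1)[OF sg])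
  have disjAB: "A \<inter> (\<Union>v\<in>neighbours E u. B v) = {}" by (auto simp: A_def B_def)
  have disjB: "B v \<inter> B w = {}" if "v \<noteq> w" for v w
    unfolding B_def by (rule matchings_at_vertex(2)[OF sg that])
  have sumA: "sum f A = x u * mmatch_poly (V - {u}) (del_edges E {u}) x"
  proof -
    have "f M = x u * ((-1) ^ card M * (\<Prod>v\<in>(V - {u}) - \<Union>M. x v))" if "M \<in> A" for M
    proof -
      have "V - \<Union>M = insert u ((V - {u}) - \<Union>M)" using that u by (auto simp: A_def)
      then show ?thesis using fV by (simp add: f_def)
    qed
    then show ?thesis
      unfolding mmatch_poly_def all_matchings_avoiding A_def[symmetric]
      by (simp add: sum_distrib_left)
  qed
  have sumB: "sum f (B v) = - mmatch_poly (V - {u, v}) (del_edges E {u, v}) x"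
    if v: "v \<in> neighbours E u" for v
  proof -
    let ?e = "{u, v}"
    have bij: "bij_betw (insert ?e) (all_matchings (del_edges E ?e)) (B v)"
      unfolding B_def using v by (intro matchings_through_edge) (auto simp: neighbours_def)
    have "f (insert ?e M) = - ((-1) ^ card M * (\<Prod>w\<in>(V - ?e) - \<Union>M. x w))"
      if M: "M \<in> all_matchings (del_edges E ?e)" for M
    proof -
      have "M \<subseteq> E" using M by (auto simp: all_matchings_def del_edges_def)
      then have "finite M" using fE finite_subset by blast
      moreover have "?e \<notin> M" using M by (auto simp: all_matchings_def del_edges_def)
      moreover have "V - \<Union>(insert ?e M) = (V - ?e) - \<Union>M" by auto
      ultimately show ?thesis by (simp add: f_def)
    qed
    then show ?thesis
      using sum.reindex_bij_betw[OF bij, of f, symmetric]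
      by (simp add: mmatch_poly_def sum_negf)
  qed
  have finB: "finite (B v)" for v by (rule finite_subset[OF _ fM]) (auto simp: B_def)
  have finA: "finite A" by (rule finite_subset[OF _ fM]) (auto simp: A_def)
  have "mmatch_poly V E x = sum f A + sum f (\<Union>v\<in>neighbours E u. B v)"
    unfolding mmatch_poly_def f_def[symmetric] split
    by (rule sum.union_disjoint) (use finA finB fN disjAB in auto)
  also have "sum f (\<Union>v\<in>neighbours E u. B v) = (\<Sum>v\<in>neighbours E u. sum f (B v))"
    by (rule sum.UNION_disjoint[OF fN]) (use finB disjB in auto)
  also have "\<dots> = (\<Sum>v\<in>neighbours E u. - mmatch_poly (V - {u, v}) (del_edges E {u, v}) x)"
    by (rule sum.cong[OF refl]) (rule sumB)
  finally show ?thesis unfolding sumA by (simp add: sum_negf)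
qed

lemma Im_one_over_neg_iff: "Im (1 / w) < 0 \<longleftrightarrow> Im w > 0"
proof (cases "w = 0")
  case False
  then have "(Re w)\<^sup>2 + (Im w)\<^sup>2 > 0"
    by (simp add: complex_eq_iff sum_power2_gt_zero_iff)
  then show ?thesis by (simp add: Im_divide divide_less_0_iff zero_less_divide_iff)
qed simp

(* Heilmann-Lieb stability: with all variables in the upper half-plane, mu(G) does not vanish and
   mu(G - u) / mu(G) lies in the lower half-plane.  Induction on |V| via the vertex recurrence. *)
theorem mmatch_poly_stable:
  assumes "simple_graph V E" and "\<And>v. v \<in> V \<Longrightarrow> Im (x v) > 0"
  shows "mmatch_poly V E x \<noteq> 0 \<and>
    (\<forall>u\<in>V. Im (mmatch_poly (V - {u}) (del_edges E {u}) x / mmatch_poly V E x) < 0)"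
  using assms
proof (induction "card V" arbitrary: V E rule: less_induct)
  case less
  note sg = less.prems(1)
  have fV: "finite V" using sg simple_graph_def by blast
  have step: "mmatch_poly V E x \<noteq> 0 \<and>
      Im (mmatch_poly (V - {u}) (del_edges E {u}) x / mmatch_poly V E x) < 0"
    if u: "u \<in> V" for u
  proof -
    let ?P = "mmatch_poly (V - {u}) (del_edges E {u}) x"
    let ?Q = "\<lambda>v. mmatch_poly (V - {u, v}) (del_edges E {u, v}) x"
    have pos: "\<And>v. v \<in> V - {u} \<Longrightarrow> Im (x v) > 0" using less.prems(2) by blast
    have IH: "?P \<noteq> 0 \<and> (\<forall>v\<in>V - {u}.
        Im (mmatch_poly (V - {u} - {v}) (del_edges (del_edges E {u}) {v}) x / ?P) < 0)"
      using less.hyps[OF card_Diff1_less[OF fV u] simple_graph_del_edges[OF sg] pos] .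
    have Qneg: "Im (?Q v / ?P) < 0" if "v \<in> neighbours E u" for v
    proof -
      have "V - {u} - {v} = V - {u, v}" "del_edges (del_edges E {u}) {v} = del_edges E {u, v}"
        by (auto simp: del_edges_def)
      then show ?thesis using IH that neighbours_subset[OF sg] by (metis subsetD)
    qed
    define w where "w = x u - (\<Sum>v\<in>neighbours E u. ?Q v / ?P)"
    have "Im (\<Sum>v\<in>neighbours E u. ?Q v / ?P) \<le> 0"
      unfolding Im_sum by (rule sum_nonpos) (use Qneg in \<open>simp add: less_imp_le\<close>)
    then have Imw: "Im w > 0" using less.prems(2)[OF u] by (simp add: w_def)
    have eq: "mmatch_poly V E x = ?P * w"
      unfolding mmatch_poly_vertex_rec[OF sg u] w_def using IH
      by (simp add: right_diff_distrib sum_distrib_left)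
    have "w \<noteq> 0" using Imw by auto
    then have "mmatch_poly V E x \<noteq> 0" and "?P / mmatch_poly V E x = 1 / w"
      using eq IH by simp_all
    then show ?thesis using Im_one_over_neg_iff Imw by simp
  qed
  show ?case
  proof (cases "V = {}")
    case True
    then show ?thesis using mmatch_poly_no_vertices[of E x] sg by simp
  next
    case False
    then show ?thesis using step by blast
  qed
qed

lemma cmatch_poly_ratio_Im_neg:
  assumes "simple_graph V E" "u \<in> V" "Im z > 0"
  shows "Im (poly (cmatch_poly (V - {u}) (del_edges E {u})) z / poly (cmatch_poly V E) z) < 0"
  using mmatch_poly_stable[OF assms(1), of "\<lambda>_. z"] assms
  by (simp add: mmatch_poly_const[symmetric] simple_graph_del_edges)

lemma cmatch_poly_nonzero: "simple_graph V E \<Longrightarrow> cmatch_poly V E \<noteq> 0"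
  using mmatch_poly_stable[of V E "\<lambda>_. \<i>"] mmatch_poly_const[of V E \<i>] by auto

lemma match_poly_nonzero: "simple_graph V E \<Longrightarrow> match_poly V E \<noteq> 0"
  using cmatch_poly_nonzero by (fastforce simp: cmatch_poly_def)

lemma map_poly_of_real_mult:
  "map_poly complex_of_real (p * q) = map_poly of_real p * map_poly of_real q"
  by (rule poly_eqI) (simp add: coeff_map_poly coeff_mult)

lemma map_poly_of_real_power:
  "map_poly complex_of_real (p ^ n) = map_poly of_real p ^ n"
  by (induction n) (simp_all add: map_poly_of_real_mult)

lemma poly_map_poly_of_real:
  "poly (map_poly complex_of_real p) (of_real x) = of_real (poly p x)"
  by (induction p) (auto simp: map_poly_pCons)

lemma order_exact_decomp:
  assumes "p \<noteq> 0"
  obtains q where "p = [:-a, 1:] ^ order a p * q" "poly q a \<noteq> 0"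
  using order_decomp[OF assms] by (auto simp: poly_eq_0_iff_dvd)

lemma order_map_poly_of_real:
  fixes p :: "real poly"
  assumes "p \<noteq> 0"
  shows "order (of_real a) (map_poly complex_of_real p) = order a p"
proof -
  define n where "n = order a p"
  obtain q where q: "p = [:-a, 1:] ^ n * q" "poly q a \<noteq> 0"
    using order_exact_decomp[OF assms] unfolding n_def by blast
  define Q where "Q = map_poly complex_of_real q"
  have Q: "poly Q (of_real a) \<noteq> 0" using q(2) by (simp add: Q_def poly_map_poly_of_real)
  have "map_poly complex_of_real p = [:- of_real a, 1:] ^ n * Q"
    unfolding q(1) Q_def by (simp add: map_poly_of_real_mult map_poly_of_real_power map_poly_pCons)
  moreover have "Q \<noteq> 0" using Q by auto
  ultimately show ?thesis using Q by (simp add: order_mult order_power_n_n order_0I n_def)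
qed

lemma mult_eq_order_cmatch_poly:
  "simple_graph V E \<Longrightarrow> mult \<theta> V E = order (of_real \<theta>) (cmatch_poly V E)"
  unfolding mult_def cmatch_poly_def by (simp add: order_map_poly_of_real match_poly_nonzero)

lemma root_in_upper_half_plane:
  fixes w :: complex and k :: nat
  assumes w: "w \<noteq> 0" and k: "k \<ge> 2" and k3: "k \<ge> 3 \<or> Arg w \<noteq> 0"
  shows "\<exists>\<zeta>. Im \<zeta> > 0 \<and> \<zeta> ^ k = w"
proof -
  define \<phi> where "\<phi> = (if Arg w > 0 then Arg w else Arg w + 2 * pi)"
  have ab: "- pi < Arg w" "Arg w \<le> pi" using Arg_bounded by auto
  have phi_pos: "\<phi> > 0" and phi_le: "\<phi> \<le> 2 * pi" and "Arg w \<noteq> 0 \<Longrightarrow> \<phi> < 2 * pi"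
    using ab pi_gt_zero by (auto simp: \<phi>_def)
  moreover have "pi * 2 \<le> pi * real k" "k \<ge> 3 \<Longrightarrow> pi * 3 \<le> pi * real k"
    using k by simp_all
  ultimately have "\<phi> < pi * real k" using k3 pi_gt_zero by linarith
  then have phi_lt: "\<phi> / k < pi" using k by (simp add: pos_divide_less_eq)
  define \<zeta> where "\<zeta> = rcis (root k (cmod w)) (\<phi> / k)"
  have "Im \<zeta> > 0"
    unfolding \<zeta>_def using w k phi_pos phi_lt by (simp add: sin_gt_zero)
  moreover have "\<zeta> ^ k = w"
  proof -
    have "\<zeta> ^ k = rcis (root k (cmod w) ^ k) (real k * (\<phi> / k))"
      unfolding \<zeta>_def by (rule DeMoivre2)
    also have "\<dots> = rcis (cmod w) (Arg w)"
      using k by (simp add: \<phi>_def rcis_def cis.ctr)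
    also have "\<dots> = w" by (rule rcis_cmod_Arg)
    finally show ?thesis .
  qed
  ultimately show ?thesis by blast
qed

lemma Im_limit_nonpos:
  fixes f :: "real \<Rightarrow> complex"
  assumes "(f \<longlongrightarrow> L) (at_right 0)" and "\<And>\<delta>. \<delta> > 0 \<Longrightarrow> Im (f \<delta>) \<le> 0"
  shows "Im L \<le> 0"
proof -
  have "((\<lambda>\<delta>. Im (f \<delta>)) \<longlongrightarrow> Im L) (at_right 0)" using assms(1) by (rule tendsto_Im)
  moreover have "eventually (\<lambda>\<delta>. Im (f \<delta>) \<le> 0) (at_right 0)"
    using eventually_at_right_less[of 0] by eventually_elim (rule assms(2))
  ultimately show ?thesis by (rule tendsto_upperbound) simp
qed

lemma Arg_eq_zero_imp_real: "Arg w = 0 \<Longrightarrow> Im w = 0"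
  using rcis_cmod_Arg[of w] by (metis Im_rcis mult_zero_right sin_zero)

lemma direction_off_positive_axis:
  fixes c :: complex
  assumes "c \<noteq> 0"
  obtains w where "w \<noteq> 0" "Arg w \<noteq> 0" "Im (c * w) = 1"
proof (cases "Arg (\<i> / c) = 0")
  case False
  moreover have "Im (c * (\<i> / c)) = 1" using assms by simp
  ultimately show ?thesis using assms by (intro that[of "\<i> / c"]) auto
next
  case True
  then have real: "Im (\<i> / c) = 0" by (rule Arg_eq_zero_imp_real)
  have "\<i> / c \<noteq> 0" using assms by simp
  then have "Re (\<i> / c) \<noteq> 0" using real complex_eq_iff by force
  have rot: "(\<i> - 1) / c = (1 + \<i>) * (\<i> / c)" by (simp add: field_simps)
  have Im_rot: "Im ((1 + \<i>) * v) = Re v + Im v" for v :: complex by simp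
  have "Im ((\<i> - 1) / c) \<noteq> 0"
    unfolding rot using Im_rot[of "\<i> / c"] real \<open>Re (\<i> / c) \<noteq> 0\<close> by linarith
  then have "Arg ((\<i> - 1) / c) \<noteq> 0" using Arg_eq_zero_imp_real by blast
  moreover have "Im (c * ((\<i> - 1) / c)) = 1" using assms by simp
  moreover have "(\<i> - 1) / c \<noteq> 0" using \<open>Im ((\<i> - 1) / c) \<noteq> 0\<close> by auto
  ultimately show ?thesis using that by blast
qed

(* Local interlacing: if P/Q maps the upper half-plane into the lower one, then at a real point the
   order of P exceeds that of Q by at most one.  Otherwise P/Q ~ c (z - theta)^k with k >= 2, and
   approaching theta along a suitable ray makes the imaginary part positive. *)
lemma order_le_Suc_of_Im_neg:
  fixes P Q :: "complex poly" and \<theta> :: real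
  assumes P: "P \<noteq> 0" and Q: "Q \<noteq> 0"
    and neg: "\<And>z. Im z > 0 \<Longrightarrow> Im (poly P z / poly Q z) < 0"
  shows "order (of_real \<theta>) P \<le> order (of_real \<theta>) Q + 1"
proof (rule ccontr)
  define t where "t = (of_real \<theta> :: complex)"
  define b where "b = order t Q"
  define k where "k = order t P - b"
  assume "\<not> ?thesis"
  then have k2: "2 \<le> k" and a: "order t P = k + b" by (simp_all add: k_def b_def t_def)
  obtain P1 where P1: "P = [:-t, 1:] ^ (k + b) * P1" "poly P1 t \<noteq> 0"
    using order_exact_decomp[OF P] a by metis
  obtain Q1 where Q1: "Q = [:-t, 1:] ^ b * Q1" "poly Q1 t \<noteq> 0"
    using order_exact_decomp[OF Q] b_def by metis
  define c where "c = poly P1 t / poly Q1 t"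
  have "c \<noteq> 0" using P1(2) Q1(2) by (simp add: c_def)
  obtain w where w: "w \<noteq> 0" "Arg w \<noteq> 0" "Im (c * w) = 1"
    by (rule direction_off_positive_axis[OF \<open>c \<noteq> 0\<close>])
  obtain \<omega> where \<omega>: "Im \<omega> > 0" "\<omega> ^ k = w"
    using root_in_upper_half_plane[OF w(1) k2 disjI2[OF w(2)]] by blast
  define ray where "ray \<delta> = t + of_real \<delta> * \<omega>" for \<delta> :: real
  define g where "g \<delta> = \<omega> ^ k * poly P1 (ray \<delta>) / poly Q1 (ray \<delta>)" for \<delta>
  have "(ray \<longlongrightarrow> t + of_real 0 * \<omega>) (at_right 0)"
    unfolding ray_def by (intro tendsto_intros)
  then have "(ray \<longlongrightarrow> t) (at_right 0)" by simp
  then have "(g \<longlongrightarrow> \<omega> ^ k * poly P1 t / poly Q1 t) (at_right 0)"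
    unfolding g_def by (intro tendsto_intros Q1(2))
  then have "(g \<longlongrightarrow> \<omega> ^ k * c) (at_right 0)" by (simp add: c_def)
  moreover have "Im (g \<delta>) \<le> 0" if "\<delta> > 0" for \<delta>
  proof -
    define d where "d = of_real \<delta> * \<omega>"
    have d: "d \<noteq> 0" using that \<omega>(1) by (auto simp: d_def)
    have ray: "Im (ray \<delta>) > 0" using that \<omega>(1) by (simp add: ray_def t_def)
    have Pd: "poly P (ray \<delta>) = d ^ b * (d ^ k * poly P1 (ray \<delta>))"
      by (simp add: P1(1) ray_def d_def power_add mult_ac)
    have Qd: "poly Q (ray \<delta>) = d ^ b * poly Q1 (ray \<delta>)"
      by (simp add: Q1(1) ray_def d_def)
    have "poly P (ray \<delta>) / poly Q (ray \<delta>) = d ^ k * poly P1 (ray \<delta>) / poly Q1 (ray \<delta>)"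
      unfolding Pd Qd using d by (simp add: mult_divide_mult_cancel_left)
    also have "\<dots> = of_real (\<delta> ^ k) * g \<delta>"
      by (simp add: d_def g_def power_mult_distrib)
    finally have "Im (of_real (\<delta> ^ k) * g \<delta>) < 0" using neg[OF ray] by simp
    then show ?thesis using that by (simp add: mult_less_0_iff)
  qed
  ultimately have "Im (\<omega> ^ k * c) \<le> 0" by (rule Im_limit_nonpos)
  moreover have "\<omega> ^ k * c = c * w" using \<omega>(2) by (simp only: mult.commute)
  ultimately show False using w(3) by simp
qed

lemma mult_delete_vertex:
  assumes sg: "simple_graph V E" and u: "u \<in> V"
  shows "mult \<theta> (V - {u}) (del_edges E {u}) \<le> mult \<theta> V E + 1"
    and "mult \<theta> V E \<le> mult \<theta> (V - {u}) (del_edges E {u}) + 1"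
proof -
  let ?P = "cmatch_poly (V - {u}) (del_edges E {u})" and ?Q = "cmatch_poly V E"
  have sg': "simple_graph (V - {u}) (del_edges E {u})" by (rule simple_graph_del_edges[OF sg])
  have P: "?P \<noteq> 0" and Q: "?Q \<noteq> 0" using cmatch_poly_nonzero sg sg' by blast+
  have neg: "Im (poly ?P z / poly ?Q z) < 0" if "Im z > 0" for z
    using cmatch_poly_ratio_Im_neg[OF sg u that] .
  have neg': "Im (poly (- ?Q) z / poly ?P z) < 0" if "Im z > 0" for z
  proof -
    have "Im (1 / - (poly ?P z / poly ?Q z)) < 0"
      unfolding Im_one_over_neg_iff using neg[OF that] by simp
    then show ?thesis by simp
  qed
  have "- ?Q \<noteq> 0" using Q by simp
  note orders = mult_eq_order_cmatch_poly[OF sg, of \<theta>] mult_eq_order_cmatch_poly[OF sg', of \<theta>]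
  show "mult \<theta> (V - {u}) (del_edges E {u}) \<le> mult \<theta> V E + 1"
    unfolding orders by (rule order_le_Suc_of_Im_neg[OF P Q neg])
  show "mult \<theta> V E \<le> mult \<theta> (V - {u}) (del_edges E {u}) + 1"
    using order_le_Suc_of_Im_neg[OF \<open>- ?Q \<noteq> 0\<close> P neg'] unfolding orders by simp
qed

lemma mult_delete_set_le:
  assumes sg: "simple_graph V E" and SV: "S \<subseteq> V"
  shows "mult \<theta> (V - S) (del_edges E S) \<le> mult \<theta> V E + card S"
  using simple_graph_finite_subset[OF sg SV] SV
proof (induction S rule: finite_induct)
  case empty
  show ?case by simp
next
  case (insert y S)
  then have y: "y \<in> V - S" and SV': "S \<subseteq> V" by auto
  have "mult \<theta> (V - S - {y}) (del_edges (del_edges E S) {y}) \<le> mult \<theta> (V - S) (del_edges E S) + 1"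
    by (rule mult_delete_vertex(1)[OF simple_graph_del_edges[OF sg] y])
  moreover have "V - S - {y} = V - insert y S" "del_edges (del_edges E S) {y} = del_edges E (insert y S)"
    by auto
  moreover have "mult \<theta> (V - S) (del_edges E S) \<le> mult \<theta> V E + card S" by (rule insert.IH[OF SV'])
  moreover have "card (insert y S) = card S + 1" using insert.hyps by simp
  ultimately show ?case by simp
qed

lemma extreme_subset:
  assumes sg: "simple_graph V E" and XV: "X \<subseteq> V" and YX: "Y \<subseteq> X"
    and ext: "theta_extreme \<theta> V E X"
  shows "theta_extreme \<theta> V E Y"
proof -
  have fX: "finite X" by (rule simple_graph_finite_subset[OF sg XV])
  have "X - Y \<subseteq> V - Y" using XV by blast
  then have "mult \<theta> (V - Y - (X - Y)) (del_edges (del_edges E Y) (X - Y))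
      \<le> mult \<theta> (V - Y) (del_edges E Y) + card (X - Y)"
    by (rule mult_delete_set_le[OF simple_graph_del_edges[OF sg]])
  moreover have "V - Y - (X - Y) = V - X" "del_edges (del_edges E Y) (X - Y) = del_edges E X"
    using YX by (auto simp: Un_absorb1)
  ultimately have "mult \<theta> (V - X) (del_edges E X) \<le> mult \<theta> (V - Y) (del_edges E Y) + card (X - Y)"
    by simp
  moreover have "card (X - Y) = card X - card Y" "card Y \<le> card X"
    using fX YX by (auto simp: card_Diff_subset finite_subset card_mono)
  moreover have "mult \<theta> (V - Y) (del_edges E Y) \<le> mult \<theta> V E + card Y"
    using YX XV by (intro mult_delete_set_le[OF sg]) auto
  ultimately show ?thesis using ext unfolding theta_extreme_def by linarith
qed

definition shift_on :: "'a set \<Rightarrow> complex \<Rightarrow> complex \<Rightarrow> 'a \<Rightarrow> complex" where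
  "shift_on X z s = (\<lambda>v. if v \<in> X then z + s else z)"

lemma mmatch_poly_shift_vertex:
  assumes sg: "simple_graph V E" and y: "y \<in> V"
  shows "mmatch_poly V E (x(y := x y + s))
    = mmatch_poly V E x + s * mmatch_poly (V - {y}) (del_edges E {y}) x"
proof -
  let ?x' = "x(y := x y + s)"
  have "mmatch_poly (V - {y}) (del_edges E {y}) ?x' = mmatch_poly (V - {y}) (del_edges E {y}) x"
    and "mmatch_poly (V - {y, v}) (del_edges E {y, v}) ?x' = mmatch_poly (V - {y, v}) (del_edges E {y, v}) x"
    for v by (rule mmatch_poly_cong; simp)+
  then show ?thesis
    unfolding mmatch_poly_vertex_rec[OF sg y, of ?x'] mmatch_poly_vertex_rec[OF sg y, of x]
    by (simp add: algebra_simps)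
qed

lemma mmatch_poly_shift_expand:
  assumes "simple_graph V E" "X \<subseteq> V"
  shows "mmatch_poly V E (shift_on X z s)
    = (\<Sum>S\<in>Pow X. s ^ card S * mmatch_poly (V - S) (del_edges E S) (\<lambda>_. z))"
  using simple_graph_finite_subset[OF assms] assms
proof (induction X arbitrary: V E rule: finite_induct)
  case empty
  then show ?case by (simp add: shift_on_def)
next
  case (insert y X)
  let ?f = "\<lambda>S. s ^ card S * mmatch_poly (V - S) (del_edges E S) (\<lambda>_. z)"
  have sg': "simple_graph (V - {y}) (del_edges E {y})"
    by (rule simple_graph_del_edges[OF insert.prems(1)])
  have "shift_on (insert y X) z s = (shift_on X z s)(y := shift_on X z s y + s)"
    using insert.hyps(2) by (auto simp: shift_on_def)
  then have "mmatch_poly V E (shift_on (insert y X) z s)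
      = mmatch_poly V E (shift_on X z s) + s * mmatch_poly (V - {y}) (del_edges E {y}) (shift_on X z s)"
    using insert.prems by (simp add: mmatch_poly_shift_vertex)
  also have "\<dots> = (\<Sum>S\<in>Pow X. ?f S) + (\<Sum>S\<in>Pow X. ?f (insert y S))"
  proof -
    have "card (insert y S) = Suc (card S)" if "S \<in> Pow X" for S
    proof -
      have "finite S" using that insert.hyps(1) finite_subset by blast
      moreover have "y \<notin> S" using that insert.hyps(2) by auto
      ultimately show ?thesis by simp
    qed
    then have shifted: "s * (\<Sum>S\<in>Pow X. s ^ card S
          * mmatch_poly (V - {y} - S) (del_edges (del_edges E {y}) S) (\<lambda>_. z))
        = (\<Sum>S\<in>Pow X. ?f (insert y S))"
      unfolding sum_distrib_left by (intro sum.cong refl) (simp add: Diff_Diff_Un)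
    have "X \<subseteq> V" "X \<subseteq> V - {y}" using insert.prems(2) insert.hyps(2) by blast+
    note IH = insert.IH[OF insert.prems(1) this(1)] insert.IH[OF sg' this(2)]
    show ?thesis by (simp only: IH shifted)
  qed
  also have "\<dots> = (\<Sum>S\<in>Pow (insert y X). ?f S)"
  proof -
    have "inj_on (insert y) (Pow X)" using insert.hyps(2) by (auto simp: inj_on_def)
    moreover have "Pow X \<inter> insert y ` Pow X = {}" using insert.hyps(2) by auto
    ultimately show ?thesis
      unfolding Pow_insert using insert.hyps(1)
      by (simp add: sum.union_disjoint sum.reindex)
  qed
  finally show ?case .
qed

(* The sum over x in X of mu(G - x) at the shifted point is the s-derivative of that expansion. *)
lemma mmatch_poly_shift_vertex_sum:
  assumes sg: "simple_graph V E" and XV: "X \<subseteq> V"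
  shows "(\<Sum>x\<in>X. mmatch_poly (V - {x}) (del_edges E {x}) (shift_on X z s))
    = (\<Sum>S\<in>Pow X. of_nat (card S) * s ^ (card S - 1) * mmatch_poly (V - S) (del_edges E S) (\<lambda>_. z))"
proof -
  have fX: "finite X" by (rule simple_graph_finite_subset[OF sg XV])
  define g where "g T = s ^ (card T - 1) * mmatch_poly (V - T) (del_edges E T) (\<lambda>_. z)" for T
  have one: "mmatch_poly (V - {x}) (del_edges E {x}) (shift_on X z s) = (\<Sum>T\<in>{T \<in> Pow X. x \<in> T}. g T)"
    if x: "x \<in> X" for x
  proof -
    have "mmatch_poly (V - {x}) (del_edges E {x}) (shift_on X z s)
        = mmatch_poly (V - {x}) (del_edges E {x}) (shift_on (X - {x}) z s)"
      by (rule mmatch_poly_cong) (auto simp: shift_on_def)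
    also have "\<dots> = (\<Sum>S\<in>Pow (X - {x}).
        s ^ card S * mmatch_poly (V - {x} - S) (del_edges (del_edges E {x}) S) (\<lambda>_. z))"
      by (rule mmatch_poly_shift_expand[OF simple_graph_del_edges[OF sg]]) (use XV in blast)
    also have "\<dots> = (\<Sum>S\<in>Pow (X - {x}). g (insert x S))"
    proof (rule sum.cong[OF refl])
      fix S assume S: "S \<in> Pow (X - {x})"
      then have "finite S" using fX finite_subset by blast
      moreover have "x \<notin> S" using S by auto
      ultimately have "card (insert x S) - 1 = card S" by simp
      moreover have "V - {x} - S = V - insert x S" by auto
      moreover have "del_edges (del_edges E {x}) S = del_edges E (insert x S)" by simp
      ultimately show "s ^ card S * mmatch_poly (V - {x} - S) (del_edges (del_edges E {x}) S) (\<lambda>_. z)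
          = g (insert x S)" by (simp only: g_def)
    qed
    also have "\<dots> = (\<Sum>T\<in>{T \<in> Pow X. x \<in> T}. g T)"
    proof (rule sum.reindex_bij_witness[of _ "\<lambda>T. T - {x}" "insert x"])
    qed (use x in auto)
    finally show ?thesis .
  qed
  have "(\<Sum>x\<in>X. mmatch_poly (V - {x}) (del_edges E {x}) (shift_on X z s))
      = (\<Sum>x\<in>X. \<Sum>T\<in>{T \<in> Pow X. x \<in> T}. g T)"
    by (rule sum.cong[OF refl]) (rule one)
  also have "\<dots> = (\<Sum>T\<in>Pow X. \<Sum>x\<in>{x \<in> X. x \<in> T}. g T)"
    using fX by (intro sum.swap_restrict) simp_all
  also have "\<dots> = (\<Sum>T\<in>Pow X. of_nat (card T) * g T)"
  proof (rule sum.cong[OF refl])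
    fix T assume "T \<in> Pow X"
    then have "{x \<in> X. x \<in> T} = T" by auto
    then show "(\<Sum>x\<in>{x \<in> X. x \<in> T}. g T) = of_nat (card T) * g T" by simp
  qed
  finally show ?thesis by (simp add: g_def mult.assoc)
qed

lemma sum_Pow_by_card:
  fixes g :: "nat \<Rightarrow> 'b::comm_semiring_0"
  assumes "finite X"
  shows "(\<Sum>S\<in>Pow X. g (card S) * f S) = (\<Sum>j\<le>card X. g j * (\<Sum>S | S \<subseteq> X \<and> card S = j. f S))"
proof -
  have "(\<Sum>S\<in>Pow X. g (card S) * f S) = (\<Sum>j\<le>card X. \<Sum>S | S \<in> Pow X \<and> card S = j. g (card S) * f S)"
    using assms by (intro sum.group[symmetric]) (auto intro: card_mono)
  also have "\<dots> = (\<Sum>j\<le>card X. g j * (\<Sum>S | S \<subseteq> X \<and> card S = j. f S))"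
    by (intro sum.cong refl) (simp add: sum_distrib_left)
  finally show ?thesis .
qed

definition layer :: "'a set \<Rightarrow> 'a set set \<Rightarrow> 'a set \<Rightarrow> nat \<Rightarrow> complex poly" where
  "layer V E X j = (\<Sum>S | S \<subseteq> X \<and> card S = j. cmatch_poly (V - S) (del_edges E S))"

(* Stability for the polynomial sum_j s^j layer_j(z): its logarithmic s-derivative has negative
   imaginary part whenever Im z > 0 and Im s > 0. *)
lemma layer_ratio_Im_neg:
  assumes sg: "simple_graph V E" and XV: "X \<subseteq> V" and "X \<noteq> {}"
    and z: "Im z > 0" and s: "Im s > 0"
  shows "Im ((\<Sum>j\<le>card X. of_nat j * s ^ (j - 1) * poly (layer V E X j) z)
           / (\<Sum>j\<le>card X. s ^ j * poly (layer V E X j) z)) < 0"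
proof -
  let ?x = "shift_on X z s"
  let ?D = "mmatch_poly V E ?x"
  let ?f = "\<lambda>S. mmatch_poly (V - S) (del_edges E S) (\<lambda>_. z)"
  have fX: "finite X" by (rule simple_graph_finite_subset[OF sg XV])
  have poly_layer: "poly (layer V E X j) z = (\<Sum>S | S \<subseteq> X \<and> card S = j. ?f S)" for j
    unfolding layer_def poly_sum
    by (intro sum.cong refl) (simp add: mmatch_poly_const[OF simple_graph_del_edges[OF sg]])
  have den: "(\<Sum>j\<le>card X. s ^ j * poly (layer V E X j) z) = ?D"
    unfolding poly_layer mmatch_poly_shift_expand[OF sg XV]
    by (rule sum_Pow_by_card[OF fX, of "\<lambda>j. s ^ j", symmetric])
  have num: "(\<Sum>j\<le>card X. of_nat j * s ^ (j - 1) * poly (layer V E X j) z)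
      = (\<Sum>x\<in>X. mmatch_poly (V - {x}) (del_edges E {x}) ?x)"
    unfolding poly_layer mmatch_poly_shift_vertex_sum[OF sg XV]
    by (rule sum_Pow_by_card[OF fX, of "\<lambda>j. of_nat j * s ^ (j - 1)", symmetric])
  have "\<And>v. v \<in> V \<Longrightarrow> Im (?x v) > 0" using z s by (simp add: shift_on_def)
  then have st: "?D \<noteq> 0 \<and> (\<forall>u\<in>V. Im (mmatch_poly (V - {u}) (del_edges E {u}) ?x / ?D) < 0)"
    by (rule mmatch_poly_stable[OF sg])
  have "(\<Sum>x\<in>X. Im (mmatch_poly (V - {x}) (del_edges E {x}) ?x / ?D)) < (\<Sum>x\<in>X. 0)"
    using st XV by (intro sum_strict_mono[OF fX \<open>X \<noteq> {}\<close>]) auto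
  then show ?thesis
    unfolding num den sum_divide_distrib Im_sum by simp
qed

(* Bookkeeping of powers of delta for the substitution z = t + i delta^k, s = sigma / delta^p. *)
lemma pencil_scaling:
  fixes d \<sigma> :: complex
  assumes d: "d \<noteq> 0" and le: "p * j \<le> k * q"
  shows "(\<sigma> / d ^ p) ^ j * (\<i> * d ^ k) ^ (m + q)
    = d ^ (k * m) * (\<sigma> ^ j * \<i> ^ (m + q) * d ^ (k * q - p * j))"
proof -
  have e: "k * (m + q) = k * m + (k * q - p * j) + p * j" using le by (simp add: distrib_left)
  have "(\<i> * d ^ k) ^ (m + q) = \<i> ^ (m + q) * d ^ (k * (m + q))"
    by (simp only: power_mult_distrib power_mult)
  also have "d ^ (k * (m + q)) = d ^ (k * m) * d ^ (k * q - p * j) * d ^ (p * j)"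
    unfolding e power_add by (rule refl)
  finally have pow: "(\<i> * d ^ k) ^ (m + q) = \<i> ^ (m + q) * (d ^ (k * m) * d ^ (k * q - p * j) * d ^ (p * j))" .
  have quot: "(\<sigma> / d ^ p) ^ j = \<sigma> ^ j / d ^ (p * j)" by (simp only: power_divide power_mult)
  have cancel: "x \<noteq> 0 \<Longrightarrow> y / x * (u * (v * w * x)) = v * (y * u * w)" for x y u v w :: complex
    by (simp add: field_simps)
  show ?thesis unfolding quot pow by (rule cancel) (simp add: d)
qed

(* With sigma^k A = - B / 2^k the limit of the rescaled quotient, k sigma^k A / (sigma (B + sigma^k A)),
   equals -(k / (2^k - 1)) / sigma and so lies in the upper half-plane. *)
lemma pencil_limit_value:
  fixes B W \<sigma> :: complex
  assumes B: "B \<noteq> 0" and \<sigma>: "Im \<sigma> > 0" and k: "1 \<le> k" and W: "W = - B / 2 ^ k"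
  shows "B + W \<noteq> 0" and "Im (of_nat k * W / (\<sigma> * (B + W))) > 0"
proof -
  define P where "P = (2::complex) ^ k"
  have two: "(1::real) < 2 ^ k" using k by (simp add: one_less_power)
  moreover have "cmod P = 2 ^ k" by (simp add: P_def norm_power)
  ultimately have P1: "P - 1 \<noteq> 0" by auto
  have P0: "P \<noteq> 0" by (simp add: P_def)
  have \<sigma>0: "\<sigma> \<noteq> 0" using \<sigma> by auto
  have sum: "B + W = B * (P - 1) / P" unfolding W P_def[symmetric] using P0 by (simp add: field_simps)
  then show "B + W \<noteq> 0" using B P0 P1 by simp
  define r where "r = real k / (2 ^ k - 1)"
  have ident: "n * (- B / P) / (\<sigma> * (B * (P - 1) / P)) = - (n / (P - 1)) / \<sigma>" for n
    using B \<sigma>0 P0 P1 by (simp add: field_simps)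
  have "of_nat k * W / (\<sigma> * (B + W)) = of_nat k * W / (\<sigma> * (B * (P - 1) / P))"
    by (simp only: sum)
  also have "\<dots> = of_nat k * (- B / P) / (\<sigma> * (B * (P - 1) / P))"
    by (simp only: W P_def)
  also have "\<dots> = - (of_nat k / (P - 1)) / \<sigma>" by (rule ident)
  also have "of_nat k / (P - 1) = of_real r" by (simp add: P_def r_def)
  also have "- of_real r / \<sigma> = of_real (- r) * (1 / \<sigma>)" by simp
  finally have limit_eq: "of_nat k * W / (\<sigma> * (B + W)) = of_real (- r) * (1 / \<sigma>)" .
  have Im_scale: "Im (of_real a * w) = a * Im w" for a w by simp
  have "r > 0" using two k by (simp add: r_def)
  moreover have "Im (1 / \<sigma>) < 0" using \<sigma> Im_one_over_neg_iff by blast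
  ultimately show "Im (of_nat k * W / (\<sigma> * (B + W))) > 0"
    unfolding limit_eq Im_scale by (simp add: mult_pos_neg)
qed

lemma pencil_coefficients_split:
  fixes a :: "nat \<Rightarrow> complex poly"
  assumes a0: "a 0 \<noteq> 0" "order t (a 0) = m + g 0"
    and ak: "a k \<noteq> 0" "order t (a k) = m + g k"
    and mid: "\<And>j. 0 < j \<Longrightarrow> j < k \<Longrightarrow> [:-t, 1:] ^ (m + g j) dvd a j"
  obtains b where "\<And>j. j \<le> k \<Longrightarrow> a j = [:-t, 1:] ^ (m + g j) * b j"
    and "poly (b 0) t \<noteq> 0" and "poly (b k) t \<noteq> 0"
proof -
  have "\<forall>j\<in>{..k}. \<exists>b. a j = [:-t, 1:] ^ (m + g j) * b \<and> (j = 0 \<or> j = k \<longrightarrow> poly b t \<noteq> 0)"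
  proof
    fix j assume "j \<in> {..k}"
    then consider "j = 0" | "j = k" | "0 < j" "j < k" by fastforce
    then show "\<exists>b. a j = [:-t, 1:] ^ (m + g j) * b \<and> (j = 0 \<or> j = k \<longrightarrow> poly b t \<noteq> 0)"
    proof cases
      case 1
      obtain b where "a 0 = [:-t, 1:] ^ order t (a 0) * b" "poly b t \<noteq> 0"
        by (rule order_exact_decomp[OF a0(1)])
      then show ?thesis using 1 a0(2) by auto
    next
      case 2
      obtain b where "a k = [:-t, 1:] ^ order t (a k) * b" "poly b t \<noteq> 0"
        by (rule order_exact_decomp[OF ak(1)])
      then show ?thesis using 2 ak(2) by auto
    next
      case 3
      then show ?thesis using mid[OF 3] by (auto elim!: dvdE)
    qed
  qed
  from bchoice[OF this] obtain b where
    "\<forall>j\<in>{..k}. a j = [:-t, 1:] ^ (m + g j) * b j \<and> (j = 0 \<or> j = k \<longrightarrow> poly (b j) t \<noteq> 0)"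
    by blast
  then show ?thesis by (intro that) auto
qed

lemma rescaled_quotient:
  fixes N D NT DT s c \<sigma> r :: complex
  assumes "s * N = c * NT" "D = c * DT" "s = \<sigma> / r" "r \<noteq> 0" "c \<noteq> 0" "\<sigma> \<noteq> 0"
  shows "N / D = r * (NT / (\<sigma> * DT))"
proof (cases "DT = 0")
  case False
  have "N = c * NT * r / \<sigma>" using assms by (simp add: field_simps)
  then show ?thesis using assms False by (simp add: field_simps)
qed (use assms in simp)

(* After the substitution z = t + i delta^k, s = sigma / delta^p the rescaled terms T_j still satisfy the
   sign condition inherited from stability. *)
lemma pencil_rescaled_sign:
  fixes a b :: "nat \<Rightarrow> complex poly" and t \<sigma> :: complex and \<delta> :: real
  assumes t: "Im t = 0" and \<sigma>: "Im \<sigma> > 0" and \<delta>: "\<delta> > 0"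
    and a: "\<And>j. j \<le> k \<Longrightarrow> a j = [:-t, 1:] ^ (m + g j) * b j"
    and le: "\<And>j. j \<le> k \<Longrightarrow> p * j \<le> k * g j"
    and stable: "\<And>z s. Im z > 0 \<Longrightarrow> Im s > 0 \<Longrightarrow>
      Im ((\<Sum>j\<le>k. of_nat j * s ^ (j - 1) * poly (a j) z) / (\<Sum>j\<le>k. s ^ j * poly (a j) z)) \<le> 0"
    and T: "\<And>j. T j = \<sigma> ^ j * \<i> ^ (m + g j) * of_real \<delta> ^ (k * g j - p * j)
                       * poly (b j) (t + \<i> * of_real \<delta> ^ k)"
  shows "Im ((\<Sum>j\<le>k. of_nat j * T j) / (\<sigma> * (\<Sum>j\<le>k. T j))) \<le> 0"
proof -
  define z where "z = t + \<i> * of_real \<delta> ^ k"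
  define s where "s = \<sigma> / of_real \<delta> ^ p"
  define c where "c = (of_real \<delta> :: complex) ^ (k * m)"
  let ?N = "\<Sum>j\<le>k. of_nat j * s ^ (j - 1) * poly (a j) z"
  let ?D = "\<Sum>j\<le>k. s ^ j * poly (a j) z"
  let ?NT = "\<Sum>j\<le>k. of_nat j * T j" and ?DT = "\<Sum>j\<le>k. T j"
  have d: "(of_real \<delta> :: complex) \<noteq> 0" using \<delta> by simp
  have \<sigma>0: "\<sigma> \<noteq> 0" using \<sigma> by auto
  have c: "c \<noteq> 0" and s: "s \<noteq> 0" using \<delta> \<sigma>0 by (auto simp: c_def s_def)
  have scaled: "s ^ j * poly (a j) z = c * T j" if j: "j \<le> k" for j
  proof -
    have "poly (a j) z = (\<i> * of_real \<delta> ^ k) ^ (m + g j) * poly (b j) z"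
      by (simp add: a[OF j] z_def)
    then have "s ^ j * poly (a j) z
        = ((\<sigma> / of_real \<delta> ^ p) ^ j * (\<i> * of_real \<delta> ^ k) ^ (m + g j)) * poly (b j) z"
      by (simp add: s_def mult.assoc)
    also have "\<dots> = c * T j"
      unfolding pencil_scaling[OF d le[OF j]] by (simp add: c_def T z_def mult.assoc)
    finally show ?thesis .
  qed
  have den: "?D = c * ?DT"
    unfolding sum_distrib_left by (intro sum.cong refl) (simp add: scaled)
  have "s * (of_nat j * s ^ (j - 1) * poly (a j) z) = c * (of_nat j * T j)" if j: "j \<le> k" for j
  proof (cases j)
    case (Suc i)
    then have "s * (of_nat j * s ^ (j - 1) * poly (a j) z) = of_nat j * (s ^ j * poly (a j) z)"
      by (simp add: mult_ac)
    then show ?thesis unfolding scaled[OF j] by (simp add: mult_ac)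
  qed simp
  then have num: "s * ?N = c * ?NT"
    unfolding sum_distrib_left by (intro sum.cong refl) simp
  have ratio: "?N / ?D = of_real (\<delta> ^ p) * (?NT / (\<sigma> * ?DT))"
    by (rule rescaled_quotient[OF num den _ _ c \<sigma>0]) (use d in \<open>simp_all add: s_def\<close>)
  have "Im z > 0" "Im s > 0"
    using \<delta> \<sigma> t by (simp_all add: z_def s_def flip: of_real_power)
  then have "Im (?N / ?D) \<le> 0" by (rule stable)
  moreover have Im_scale: "Im (of_real (\<delta> ^ p) * W) = \<delta> ^ p * Im W" for W :: complex by simp
  ultimately have "\<delta> ^ p * Im (?NT / (\<sigma> * ?DT)) \<le> 0" by (simp only: ratio Im_scale)
  moreover have pos: "0 < \<delta> ^ p" using \<delta> by simp
  ultimately have "\<delta> ^ p * Im (?NT / (\<sigma> * ?DT)) / \<delta> ^ p \<le> 0" by (rule divide_nonpos_pos)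
  then show ?thesis using \<delta> by simp
qed

(* As delta -> 0+ only the terms j = 0 and j = k survive, since for 0 < j < k they carry the factor
   delta^((k - p) j). *)
lemma pencil_rescaled_limit:
  fixes b :: "nat \<Rightarrow> complex poly" and t \<sigma> :: complex
  assumes pk: "p < k" and g0: "g 0 = 0" and gk: "g k = p" and gmid: "\<And>j. 0 < j \<Longrightarrow> j < k \<Longrightarrow> g j = j"
    and T: "\<And>j \<delta>. T j \<delta> = \<sigma> ^ j * \<i> ^ (m + g j) * of_real \<delta> ^ (k * g j - p * j)
                       * poly (b j) (t + \<i> * of_real \<delta> ^ k)"
  defines "A \<equiv> \<i> ^ (m + p) * poly (b k) t" and "B \<equiv> \<i> ^ m * poly (b 0) t"
  shows "((\<lambda>\<delta>. \<Sum>j\<le>k. T j \<delta>) \<longlongrightarrow> B + \<sigma> ^ k * A) (at_right 0)"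
    and "((\<lambda>\<delta>. \<Sum>j\<le>k. of_nat j * T j \<delta>) \<longlongrightarrow> of_nat k * (\<sigma> ^ k * A)) (at_right 0)"
proof -
  have "((\<lambda>\<delta>::real. t + \<i> * of_real \<delta> ^ k) \<longlongrightarrow> t + \<i> * of_real 0 ^ k) (at_right 0)"
    by (intro tendsto_intros)
  then have z_lim: "((\<lambda>\<delta>::real. t + \<i> * of_real \<delta> ^ k) \<longlongrightarrow> t) (at_right 0)"
    using pk by (simp add: power_0_left)
  define L where "L j = \<sigma> ^ j * \<i> ^ (m + g j) * of_real 0 ^ (k * g j - p * j) * poly (b j) t" for j
  have T_lim: "(T j \<longlongrightarrow> L j) (at_right 0)" for j
    unfolding T[abs_def] L_def by (intro tendsto_intros z_lim)
  have L_eq: "L j = (if j = 0 then B else 0) + (if j = k then \<sigma> ^ k * A else 0)" if jk: "j \<le> k" for j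
  proof -
    have "j = 0 \<or> j = k \<or> (0 < j \<and> j < k)" using jk by linarith
    then consider "j = 0" | "j = k" | "0 < j" "j < k" by blast
    then show ?thesis
    proof cases
      case 1
      then show ?thesis using pk by (simp add: L_def B_def g0)
    next
      case 2
      then show ?thesis using pk by (simp add: L_def A_def gk mult_ac)
    next
      case 3
      then have "k * j - p * j > 0" using pk by simp
      then show ?thesis using 3 by (simp add: L_def gmid)
    qed
  qed
  have "(\<Sum>j\<le>k. L j) = (\<Sum>j\<le>k. (if j = 0 then B else 0) + (if j = k then \<sigma> ^ k * A else 0))"
    by (rule sum.cong) (simp_all add: L_eq)
  then have sum_L: "(\<Sum>j\<le>k. L j) = B + \<sigma> ^ k * A" by (simp add: sum.distrib)
  have "(\<Sum>j\<le>k. of_nat j * L j) = (\<Sum>j\<le>k. if j = k then of_nat k * (\<sigma> ^ k * A) else 0)"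
    by (rule sum.cong) (simp_all add: L_eq)
  then have sum_jL: "(\<Sum>j\<le>k. of_nat j * L j) = of_nat k * (\<sigma> ^ k * A)" by simp
  show "((\<lambda>\<delta>. \<Sum>j\<le>k. T j \<delta>) \<longlongrightarrow> B + \<sigma> ^ k * A) (at_right 0)"
    unfolding sum_L[symmetric] by (intro tendsto_sum T_lim)
  show "((\<lambda>\<delta>. \<Sum>j\<le>k. of_nat j * T j \<delta>) \<longlongrightarrow> of_nat k * (\<sigma> ^ k * A)) (at_right 0)"
    unfolding sum_jL[symmetric] by (intro tendsto_sum tendsto_mult tendsto_const T_lim)
qed

(* Otherwise a_k vanishes to order m + p with p < k; along z = theta + i delta^k, s = sigma / delta^p only
   a_0 and a_k survive, and a suitable choice of sigma gives a limit with positive imaginary part. *)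
theorem stable_pencil_top_order:
  fixes a :: "nat \<Rightarrow> complex poly" and \<theta> :: real
  assumes k3: "3 \<le> k"
    and a0: "a 0 \<noteq> 0" "order (of_real \<theta>) (a 0) = m"
    and ak: "a k \<noteq> 0" "m \<le> order (of_real \<theta>) (a k)"
    and mid: "\<And>j. 0 < j \<Longrightarrow> j < k \<Longrightarrow> [:- of_real \<theta>, 1:] ^ (m + j) dvd a j"
    and stable: "\<And>z s. Im z > 0 \<Longrightarrow> Im s > 0 \<Longrightarrow>
      Im ((\<Sum>j\<le>k. of_nat j * s ^ (j - 1) * poly (a j) z) / (\<Sum>j\<le>k. s ^ j * poly (a j) z)) \<le> 0"
  shows "m + k \<le> order (of_real \<theta>) (a k)"
proof (rule ccontr)
  define t where "t = (of_real \<theta> :: complex)"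
  define p where "p = order t (a k) - m"
  assume "\<not> ?thesis"
  then have pk: "p < k" and ordk: "order t (a k) = m + p"
    using ak(2) unfolding p_def t_def by linarith+
  define g where "g j = (if j = k then p else j)" for j
  have g0: "g 0 = 0" and gk: "g k = p" and gmid: "\<And>j. 0 < j \<Longrightarrow> j < k \<Longrightarrow> g j = j"
    using k3 by (simp_all add: g_def)
  have le: "p * j \<le> k * g j" if "j \<le> k" for j
    using pk that by (auto simp: g_def)
  obtain b where b: "\<And>j. j \<le> k \<Longrightarrow> a j = [:-t, 1:] ^ (m + g j) * b j"
    and b0: "poly (b 0) t \<noteq> 0" and bk: "poly (b k) t \<noteq> 0"
    by (rule pencil_coefficients_split[of a t m g k])
      (use a0 ak(1) ordk mid gmid in \<open>simp_all add: g0 gk t_def\<close>)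
  define A where "A = \<i> ^ (m + p) * poly (b k) t"
  define B where "B = \<i> ^ m * poly (b 0) t"
  have A: "A \<noteq> 0" and B: "B \<noteq> 0" using b0 bk by (simp_all add: A_def B_def)
  have "- B / (2 ^ k * A) \<noteq> 0" using A B by simp
  from root_in_upper_half_plane[OF this _ disjI1[OF k3]] k3
  obtain \<sigma> where \<sigma>: "Im \<sigma> > 0" "\<sigma> ^ k = - B / (2 ^ k * A)" by auto
  have W: "\<sigma> ^ k * A = - B / 2 ^ k" using \<sigma>(2) A by (simp add: field_simps)
  define T where "T j \<delta> = \<sigma> ^ j * \<i> ^ (m + g j) * of_real \<delta> ^ (k * g j - p * j)
      * poly (b j) (t + \<i> * of_real \<delta> ^ k)" for j \<delta>
  have sign: "Im ((\<Sum>j\<le>k. of_nat j * T j \<delta>) / (\<sigma> * (\<Sum>j\<le>k. T j \<delta>))) \<le> 0" if "\<delta> > 0" for \<delta>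
    by (rule pencil_rescaled_sign[OF _ \<sigma>(1) that b le stable]) (simp_all add: t_def T_def)
  note limits = pencil_rescaled_limit[where g = g and T = T, OF pk g0 gk gmid T_def]
  have limD: "((\<lambda>\<delta>. \<Sum>j\<le>k. T j \<delta>) \<longlongrightarrow> B + \<sigma> ^ k * A) (at_right 0)"
    unfolding A_def B_def by (rule limits(1))
  have limN: "((\<lambda>\<delta>. \<Sum>j\<le>k. of_nat j * T j \<delta>) \<longlongrightarrow> of_nat k * (\<sigma> ^ k * A)) (at_right 0)"
    unfolding A_def B_def by (rule limits(2))
  have k1: "1 \<le> k" using k3 by simp
  have "\<sigma> * (B + \<sigma> ^ k * A) \<noteq> 0" using pencil_limit_value(1)[OF B \<sigma>(1) k1 W] \<sigma>(1) by auto
  from tendsto_divide[OF limN tendsto_mult[OF tendsto_const limD] this] sign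
  have "Im (of_nat k * (\<sigma> ^ k * A) / (\<sigma> * (B + \<sigma> ^ k * A))) \<le> 0"
    by (rule Im_limit_nonpos)
  then show False using pencil_limit_value(2)[OF B \<sigma>(1) k1 W] by simp
qed

lemma layer_zero: "finite X \<Longrightarrow> layer V E X 0 = cmatch_poly V E"
proof -
  assume "finite X"
  then have "{S. S \<subseteq> X \<and> card S = 0} = {{}}" using finite_subset by fastforce
  then show ?thesis by (simp add: layer_def)
qed

lemma layer_top: "finite X \<Longrightarrow> layer V E X (card X) = cmatch_poly (V - X) (del_edges E X)"
proof -
  assume fX: "finite X"
  have "{S. S \<subseteq> X \<and> card S = card X} = {X}"
  proof (intro equalityI subsetI)
    fix S assume "S \<in> {S. S \<subseteq> X \<and> card S = card X}"
    then show "S \<in> {X}" using card_subset_eq[OF fX] by simp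
  qed simp
  then show ?thesis by (simp add: layer_def)
qed

lemma layer_dvd:
  assumes sg: "simple_graph V E" and ext: "\<And>S. S \<subseteq> X \<Longrightarrow> card S = j \<Longrightarrow> theta_extreme \<theta> V E S"
  shows "[:- of_real \<theta>, 1:] ^ (mult \<theta> V E + j) dvd layer V E X j"
  unfolding layer_def
proof (rule dvd_sum)
  fix S assume "S \<in> {S. S \<subseteq> X \<and> card S = j}"
  then have "mult \<theta> (V - S) (del_edges E S) = mult \<theta> V E + j"
    using ext by (simp add: theta_extreme_def)
  then show "[:- of_real \<theta>, 1:] ^ (mult \<theta> V E + j) dvd cmatch_poly (V - S) (del_edges E S)"
    using mult_eq_order_cmatch_poly[OF simple_graph_del_edges[OF sg]] cmatch_poly_nonzero
    by (simp add: order_divides)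
qed

(* A set of size at least three whose proper subsets are all theta-extreme is theta-extreme:
   apply the key step to the layers of X. *)
lemma extreme_if_proper_subsets_extreme:
  assumes sg: "simple_graph V E" and XV: "X \<subseteq> V" and k3: "3 \<le> card X"
    and proper: "\<And>S. S \<subset> X \<Longrightarrow> theta_extreme \<theta> V E S"
  shows "theta_extreme \<theta> V E X"
proof -
  define m where "m = mult \<theta> V E"
  define k where "k = card X"
  have fX: "finite X" by (rule simple_graph_finite_subset[OF sg XV])
  have Xne: "X \<noteq> {}" using k3 by auto
  have order_del: "order (of_real \<theta>) (cmatch_poly (V - S) (del_edges E S)) = mult \<theta> (V - S) (del_edges E S)"
    for S using mult_eq_order_cmatch_poly[OF simple_graph_del_edges[OF sg]] by simp
  have nonzero: "cmatch_poly (V - S) (del_edges E S) \<noteq> 0" for S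
    by (rule cmatch_poly_nonzero[OF simple_graph_del_edges[OF sg]])
  have mid: "[:- of_real \<theta>, 1:] ^ (m + j) dvd layer V E X j" if j: "0 < j" "j < k" for j
    unfolding m_def
  proof (rule layer_dvd[OF sg])
    fix S assume S: "S \<subseteq> X" "card S = j"
    then have "S \<noteq> X" using j by (auto simp: k_def)
    with S(1) show "theta_extreme \<theta> V E S" by (intro proper psubsetI)
  qed
  have lower: "m \<le> mult \<theta> (V - X) (del_edges E X)"
  proof -
    obtain y where y: "y \<in> X" using Xne by blast
    have "X - {y} \<subset> X" using y by auto
    then have "mult \<theta> (V - (X - {y})) (del_edges E (X - {y})) = m + (k - 1)"
      using proper fX y by (simp add: theta_extreme_def m_def k_def)
    moreover have "mult \<theta> (V - (X - {y})) (del_edges E (X - {y}))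
        \<le> mult \<theta> (V - (X - {y}) - {y}) (del_edges (del_edges E (X - {y})) {y}) + 1"
      using y XV by (intro mult_delete_vertex(2) simple_graph_del_edges[OF sg]) auto
    moreover have "V - (X - {y}) - {y} = V - X" "del_edges (del_edges E (X - {y})) {y} = del_edges E X"
      using y by (auto simp: insert_absorb)
    ultimately show ?thesis using k3 by (simp add: k_def)
  qed
  have "m + k \<le> mult \<theta> (V - X) (del_edges E X)"
  proof -
    have "m + k \<le> order (of_real \<theta>) (layer V E X k)"
    proof (rule stable_pencil_top_order[OF _ _ _ _ _ mid])
      show "Im ((\<Sum>j\<le>k. of_nat j * s ^ (j - 1) * poly (layer V E X j) z)
          / (\<Sum>j\<le>k. s ^ j * poly (layer V E X j) z)) \<le> 0" if "Im z > 0" "Im s > 0" for z s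
        using layer_ratio_Im_neg[OF sg XV Xne that] by (simp add: k_def)
    qed (use k3 layer_zero[OF fX] layer_top[OF fX] lower nonzero cmatch_poly_nonzero[OF sg]
        mult_eq_order_cmatch_poly[OF sg] in \<open>simp_all add: k_def m_def order_del\<close>)
    then show ?thesis using layer_top[OF fX] order_del by (simp add: k_def)
  qed
  moreover have "mult \<theta> (V - X) (del_edges E X) \<le> m + k"
    using mult_delete_set_le[OF sg XV] by (simp add: m_def k_def)
  ultimately show ?thesis by (simp add: theta_extreme_def m_def k_def)
qed

lemma nice_imp_vertex_extreme:
  assumes sg: "simple_graph V E" and XV: "X \<subseteq> V" and nice: "theta_nice \<theta> V E X" and y: "y \<in> X"
  shows "theta_extreme \<theta> V E {y}"
proof -
  have "X \<noteq> {y}" using nice by (auto simp: theta_nice_def)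
  then obtain x where x: "x \<in> X" "x \<noteq> y" using y by blast
  have "mult \<theta> (V - {y} - {x}) (del_edges (del_edges E {y}) {x}) \<le> mult \<theta> (V - {y}) (del_edges E {y}) + 1"
    using x y XV by (intro mult_delete_vertex(1) simple_graph_del_edges[OF sg]) auto
  moreover have "V - {y} - {x} = V - {x, y}" "del_edges (del_edges E {y}) {x} = del_edges E {x, y}"
    by auto
  moreover have "mult \<theta> (V - {x, y}) (del_edges E {x, y}) = mult \<theta> V E + 2"
    using nice x y by (auto simp: theta_nice_def)
  moreover have "mult \<theta> (V - {y}) (del_edges E {y}) \<le> mult \<theta> V E + 1"
    using y XV by (intro mult_delete_vertex(1)[OF sg]) auto
  ultimately show ?thesis by (simp add: theta_extreme_def)
qed

lemma nice_imp_subsets_extreme: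
  assumes sg: "simple_graph V E" and XV: "X \<subseteq> V" and nice: "theta_nice \<theta> V E X"
  shows "Y \<subseteq> X \<Longrightarrow> theta_extreme \<theta> V E Y"
proof (induction "card Y" arbitrary: Y rule: less_induct)
  case less
  have fY: "finite Y" using less.prems XV simple_graph_finite_subset[OF sg] by blast
  have "card Y = 0 \<or> card Y = 1 \<or> card Y = 2 \<or> 3 \<le> card Y" by linarith
  then consider "card Y = 0" | "card Y = 1" | "card Y = 2" | "3 \<le> card Y" by (elim disjE) auto
  then show ?case
  proof cases
    case 1
    then show ?thesis using fY by (simp add: theta_extreme_def)
  next
    case 2
    then obtain y where "Y = {y}" by (auto simp: card_Suc_eq)
    then show ?thesis using nice_imp_vertex_extreme[OF sg XV nice] less.prems by blast
  next
    case 3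
    then obtain u v where "Y = {u, v}" "u \<noteq> v" by (auto simp: card_2_iff)
    then show ?thesis using nice less.prems by (auto simp: theta_nice_def theta_extreme_def)
  next
    case 4
    show ?thesis
    proof (rule extreme_if_proper_subsets_extreme[OF sg _ 4])
      show "Y \<subseteq> V" using less.prems XV by blast
      show "theta_extreme \<theta> V E S" if "S \<subset> Y" for S
        using less.hyps[OF psubset_card_mono[OF fY that]] that less.prems by blast
    qed
  qed
qed

theorem theorem3p15:
  fixes V :: "'a set" and E :: "'a set set" and X :: "'a set" and \<theta> :: real
  assumes "simple_graph V E" and "X \<subseteq> V" and "card X > 1"
  shows "theta_extreme \<theta> V E X \<longleftrightarrow> theta_nice \<theta> V E X"
proof
  assume ext: "theta_extreme \<theta> V E X"
  show "theta_nice \<theta> V E X"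
    unfolding theta_nice_def
  proof (intro conjI ballI impI)
    show "1 < card X" by (rule assms(3))
    fix u v assume "u \<in> X" "v \<in> X" "u \<noteq> v"
    then have "theta_extreme \<theta> V E {u, v}"
      by (intro extreme_subset[OF assms(1,2) _ ext]) simp
    then show "mult \<theta> (V - {u, v}) (del_edges E {u, v}) = mult \<theta> V E + 2"
      using \<open>u \<noteq> v\<close> by (simp add: theta_extreme_def)
  qed
next
  assume "theta_nice \<theta> V E X"
  then show "theta_extreme \<theta> V E X"
    using nice_imp_subsets_extreme[OF assms(1,2)] by blast
qed

end
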